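(* Let $n,m\ge 0$ and let $\lambda$ be a partition with $n+m$ parts. Then $$G_{\lambda}(z_1,\dots,z_n,w_1,\dots,w_m;\beta)=\sum_{\nu}G_{\lambda/\nu}(z_1,\dots,z_n;\beta)\,G_\nu(w_1,\dots,w_m;\beta),$$ the sum running over all partitions $\nu$ with $m$ parts. At $\beta=0$ this reduces to the corresponding identity for Schur and skew Schur polynomials.
   Context: A "partition with $N$ parts" means a weakly decreasing sequence of $N$ nonnegative integers (zeros allowed); $|\lambda|=\sum_j\lambda_j$. The Grothendieck polynomial is $G_\lambda(z_1,\dots,z_N;\beta)=\det_{1\le j,k\le N}\big(z_j^{\lambda_k+N-k}(1+\beta z_j)^{k-1}\big)/\prod_{1\le j<k\le N}(z_j-z_k)$ ($=1$ for $N=0$). For $\mu$ with $k+1$ parts and $\lambda$ with $k$ parts, $\mu\succ\lambda$ iff $\mu_j\ge\lambda_j\ge\mu_{j+1}$ ($1\le j\le k$). Single-variable skew Grothendieck polynomial: $G_{\mu/\lambda}(z;\beta)=z^{|\mu|-|\lambda|}\prod_{j=1}^k(1+\beta z-\beta z\,\delta_{\mu_{j+1},\lambda_j})$ if $\mu\succ\lambda$, and $0$ otherwise. Multivariable skew Grothendieck polynomial: for $\lambda$ with $n+m$ parts and $\nu$ with $m$ parts, $$G_{\lambda/\nu}(z_1,\dots,z_n;\beta)=\sum_{\lambda^{(1)},\dots,\lambda^{(n-1)}}\prod_{j=1}^nG_{\lambda^{(j-1)}/\lambda^{(j)}}(z_j;\beta),$$ where $\lambda^{(0)}=\lambda$,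 $\lambda^{(n)}=\nu$, and $\lambda^{(j)}$ ranges over partitions with $n+m-j$ parts (the nonzero terms are those with $\lambda^{(0)}\succ\lambda^{(1)}\succ\cdots\succ\lambda^{(n)}$). *)

theory Defs
  imports Main "Jordan_Normal_Form.Determinant"
begin

definition is_partition :: "nat \<Rightarrow> nat list \<Rightarrow> bool" where
  "is_partition N l \<longleftrightarrow> length l = N \<and> sorted_wrt (\<ge>) l"

definition bounded_partitions :: "nat \<Rightarrow> nat \<Rightarrow> nat list set" where
  "bounded_partitions N b = {l. is_partition N l \<and> (\<forall>x\<in>set l. x \<le> b)}"

text \<open>Grothendieck polynomial evaluated at the points zs (bialternant formula).\<close>
definition groth :: "'a::field \<Rightarrow> nat list \<Rightarrow> 'a list \<Rightarrow> 'a" where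
  "groth \<beta> lam zs =
     (let N = length zs in
      det (mat N N (\<lambda>(j,k). (zs!j) ^ (lam!k + N - 1 - k) * (1 + \<beta> * zs!j) ^ k))
      / (\<Prod>j<N. \<Prod>k\<in>{j<..<N}. (zs!j - zs!k)))"

definition interlaces :: "nat list \<Rightarrow> nat list \<Rightarrow> bool" where
  "interlaces mu lam \<longleftrightarrow> length mu = length lam + 1 \<and>
     (\<forall>j<length lam. mu!j \<ge> lam!j \<and> lam!j \<ge> mu!(j+1))"

definition skew1 :: "'a::field \<Rightarrow> nat list \<Rightarrow> nat list \<Rightarrow> 'a \<Rightarrow> 'a" where
  "skew1 \<beta> mu lam z =
     (if interlaces mu lam then
        z ^ (sum_list mu - sum_list lam) *
        (\<Prod>j<length lam. 1 + \<beta> * z - (if mu!(j+1) = lam!j then \<beta> * z else 0))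
      else 0)"

text \<open>The intermediate partition ranges over
  partitions with one part fewer; those with a part exceeding sum_list lam give zero
  terms (they cannot interlace with lam), so the sum is restricted to a finite set.\<close>
fun skewG :: "'a::field \<Rightarrow> nat list \<Rightarrow> nat list \<Rightarrow> 'a list \<Rightarrow> 'a" where
  "skewG \<beta> lam nu [] = (if lam = nu then 1 else 0)"
| "skewG \<beta> lam nu (z # zs) =
     (\<Sum>kap \<in> bounded_partitions (length lam - 1) (sum_list lam).
        skew1 \<beta> lam kap z * skewG \<beta> kap nu zs)"

end

theory Submission
  imports Defs
begin

text \<open>Peeling off one variable at a time, the theorem reduces to the one-variable branching rule
  G_\<lambda>(z, w) = \<Sum>_\<mu> G_\<lambda>/\<mu>(z) G_\<mu>(w). In the numerator of the bialternant formula for G_\<lambda>(z, w),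
  replace column k by (1 + \<beta>z) times itself minus z^(\<lambda>_k - \<lambda>_(k+1) + 1) times column k + 1.
  This clears the row of z except in the last column, and every remaining entry factors as
  (w_i - z) times a sum over \<lambda>_(k+1) \<le> \<mu>_k \<le> \<lambda>_k. Multilinearity in the columns expands the
  determinant into a sum over the partitions \<mu> interlacing \<lambda>, weighted exactly by G_\<lambda>/\<mu>(z),
  and the factors w_i - z cancel against the new Vandermonde factors. When 1 + \<beta>z = 0 the column
  operations are singular, but then the row of z already vanishes outside the first column and
  only \<mu> = (\<lambda>_2, \<lambda>_3, ...) contributes.\<close>

section \<open>Determinant identities\<close>

lemma det_mat_row_scale:
  fixes r :: "nat \<Rightarrow> 'a::comm_ring_1"
  shows "det (mat n n (\<lambda>(i,j). r i * f i j)) = (\<Prod>i<n. r i) * det (mat n n (\<lambda>(i,j). f i j))"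
proof -
  have "det (mat n n (\<lambda>(i,j). r i * f i j)) =
      (\<Sum>p | p permutes {0..<n}. (\<Prod>i<n. r i) * (signof p * (\<Prod>i=0..<n. f i (p i))))"
    by (subst det_def'[of _ n])
      (auto intro!: sum.cong prod.cong simp: permutes_in_image prod.distrib atLeast0LessThan)
  also have "\<dots> = (\<Prod>i<n. r i) * det (mat n n (\<lambda>(i,j). f i j))"
    by (subst det_def'[of _ n]) (auto intro!: sum.cong prod.cong simp: sum_distrib_left permutes_in_image)
  finally show ?thesis .
qed

lemma det_mat_sum_columns:
  fixes a :: "nat \<Rightarrow> 'b \<Rightarrow> 'a::comm_ring_1"
  assumes "\<And>j. j < n \<Longrightarrow> finite (S j)"
  shows "det (mat n n (\<lambda>(i,j). \<Sum>s\<in>S j. a j s * g i j s)) =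
    (\<Sum>\<sigma> \<in> PiE {..<n} S. (\<Prod>j<n. a j (\<sigma> j)) * det (mat n n (\<lambda>(i,j). g i j (\<sigma> j))))"
proof -
  let ?P = "{p. p permutes {0..<n}}"
  have "det (mat n n (\<lambda>(i,j). \<Sum>s\<in>S j. a j s * g i j s)) =
      (\<Sum>p\<in>?P. signof p * (\<Prod>j<n. \<Sum>s\<in>S j. a j s * g (p j) j s))"
    by (subst det_col[of _ n]) (auto intro!: sum.cong prod.cong simp: permutes_in_image)
  also have "\<dots> = (\<Sum>p\<in>?P. \<Sum>\<sigma>\<in>PiE {..<n} S.
      (\<Prod>j<n. a j (\<sigma> j)) * (signof p * (\<Prod>j<n. g (p j) j (\<sigma> j))))"
  proof (intro sum.cong refl)
    fix p
    have "(\<Prod>j<n. \<Sum>s\<in>S j. a j s * g (p j) j s) =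
        (\<Sum>\<sigma>\<in>PiE {..<n} S. \<Prod>j<n. a j (\<sigma> j) * g (p j) j (\<sigma> j))"
      using assms by (intro prod_sum_PiE) auto
    then show "signof p * (\<Prod>j<n. \<Sum>s\<in>S j. a j s * g (p j) j s) = (\<Sum>\<sigma>\<in>PiE {..<n} S.
        (\<Prod>j<n. a j (\<sigma> j)) * (signof p * (\<Prod>j<n. g (p j) j (\<sigma> j))))"
      by (simp add: prod.distrib sum_distrib_left ac_simps)
  qed
  also have "\<dots> = (\<Sum>\<sigma>\<in>PiE {..<n} S. (\<Prod>j<n. a j (\<sigma> j)) *
      (\<Sum>p\<in>?P. signof p * (\<Prod>j<n. g (p j) j (\<sigma> j))))"
    by (subst sum.swap) (simp add: sum_distrib_left)
  also have "\<dots> = (\<Sum>\<sigma> \<in> PiE {..<n} S. (\<Prod>j<n. a j (\<sigma> j)) * det (mat n n (\<lambda>(i,j). g i j (\<sigma> j))))"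
    by (subst det_col[of _ n]) (auto intro!: sum.cong prod.cong simp: permutes_in_image)
  finally show ?thesis .
qed

lemma det_combine_adjacent_columns:
  fixes M :: "'a::comm_ring_1 mat"
  assumes M: "M \<in> carrier_mat (Suc m) (Suc m)"
  shows "det (mat (Suc m) (Suc m) (\<lambda>(i,k).
      if k < m then x * M $$ (i,k) - y k * M $$ (i, Suc k) else M $$ (i,k))) = x ^ m * det M"
proof -
  define T where "T = mat (Suc m) (Suc m) (\<lambda>(i,k).
    if i = k then (if k < m then x else 1) else if i = Suc k then - y k else 0)"
  have T: "T \<in> carrier_mat (Suc m) (Suc m)" unfolding T_def by simp
  have "mat (Suc m) (Suc m) (\<lambda>(i,k).
      if k < m then x * M $$ (i,k) - y k * M $$ (i, Suc k) else M $$ (i,k)) = M * T"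
  proof (rule eq_matI)
    fix i k assume "i < dim_row (M * T)" "k < dim_col (M * T)"
    with M T have i: "i < Suc m" and k: "k < Suc m" by auto
    have "(M * T) $$ (i,k) = (\<Sum>l<Suc m. M $$ (i,l) * T $$ (l,k))"
      using i k M T by (simp add: scalar_prod_def atLeast0LessThan)
    also have "\<dots> = (\<Sum>l<Suc m. (if l = k then M $$ (i,k) * (if k < m then x else 1) else 0) +
        (if l = Suc k then - y k * M $$ (i, Suc k) else 0))"
      using k by (intro sum.cong refl) (auto simp: T_def)
    finally show "mat (Suc m) (Suc m) (\<lambda>(i,k).
        if k < m then x * M $$ (i,k) - y k * M $$ (i, Suc k) else M $$ (i,k)) $$ (i,k) = (M * T) $$ (i,k)"
      using i k by (simp add: sum.distrib mult.commute)
  qed (use M T in auto)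
  moreover have "det T = x ^ m"
    using det_lower_triangular[OF _ T] by (auto simp: T_def prod_list_diag_prod)
  ultimately show ?thesis using det_mult[OF M T] by simp
qed

lemma det_single_entry_first_row:
  fixes A :: "'a::comm_ring_1 mat"
  assumes A: "A \<in> carrier_mat (Suc m) (Suc m)" and k: "k \<le> m"
    and zero: "\<And>j. j \<le> m \<Longrightarrow> j \<noteq> k \<Longrightarrow> A $$ (0,j) = 0"
  shows "det A = (-1) ^ k * A $$ (0,k) * det (mat_delete A 0 k)"
proof -
  have "det A = (\<Sum>j<Suc m. A $$ (0,j) * cofactor A 0 j)"
    using laplace_expansion_row[OF A] by simp
  also have "\<dots> = A $$ (0,k) * cofactor A 0 k"
    using k zero by (subst sum.remove[of _ k]) (auto intro!: sum.neutral)
  finally show ?thesis by (simp add: cofactor_def)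
qed

lemma det_reduce_first_row:
  fixes M :: "'a::comm_ring_1 mat"
  assumes M: "M \<in> carrier_mat (Suc m) (Suc m)"
    and row0: "\<And>k. k < m \<Longrightarrow> x * M $$ (0,k) = y k * M $$ (0, Suc k)"
  shows "x ^ m * det M = (-1) ^ m * M $$ (0,m) *
    det (mat m m (\<lambda>(i,k). x * M $$ (Suc i, k) - y k * M $$ (Suc i, Suc k)))"
proof -
  let ?A = "mat (Suc m) (Suc m) (\<lambda>(i,k).
      if k < m then x * M $$ (i,k) - y k * M $$ (i, Suc k) else M $$ (i,k))"
  have "x ^ m * det M = det ?A"
    by (simp add: det_combine_adjacent_columns[OF M])
  also have "\<dots> = (-1) ^ m * ?A $$ (0,m) * det (mat_delete ?A 0 m)"
    by (rule det_single_entry_first_row) (auto simp: row0)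
  also have "mat_delete ?A 0 m = mat m m (\<lambda>(i,k). x * M $$ (Suc i, k) - y k * M $$ (Suc i, Suc k))"
    by (rule eq_matI) (auto simp: mat_delete_def)
  finally show ?thesis by simp
qed

section \<open>The bialternant numerator\<close>

lemma branching_difference_identity:
  fixes z w \<beta> :: "'a::comm_ring_1"
  assumes "b \<le> a"
  shows "(1 + \<beta>*z) * w ^ Suc a - z ^ (Suc a - b) * (1 + \<beta>*w) * w ^ b =
    (w - z) * (\<Sum>\<mu>=b..a. z ^ (a - \<mu>) * (1 + \<beta>*z - (if b = \<mu> then \<beta>*z else 0)) * w ^ \<mu>)"
  using assms
proof (induction a rule: nat_induct_at_least)
  case base
  show ?case by (simp add: algebra_simps)
next
  case (Suc a)
  let ?c = "\<lambda>\<mu>. 1 + \<beta>*z - (if b = \<mu> then \<beta>*z else 0)"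
  define S where "S = (\<Sum>\<mu>=b..a. z ^ (a - \<mu>) * ?c \<mu> * w ^ \<mu>)"
  have "(\<Sum>\<mu>=b..a. z ^ (Suc a - \<mu>) * ?c \<mu> * w ^ \<mu>) = z * S"
    unfolding S_def sum_distrib_left by (intro sum.cong refl) (simp add: Suc_diff_le)
  then have sum_Suc: "(\<Sum>\<mu>=b..Suc a. z ^ (Suc a - \<mu>) * ?c \<mu> * w ^ \<mu>) = z * S + (1 + \<beta>*z) * w ^ Suc a"
    using Suc.hyps by simp
  have IH: "z ^ (Suc a - b) * (1 + \<beta>*w) * w ^ b = (1 + \<beta>*z) * w ^ Suc a - (w - z) * S"
    using Suc.IH unfolding S_def by (simp add: algebra_simps)
  have "z ^ (Suc (Suc a) - b) = z * z ^ (Suc a - b)"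
    using Suc.hyps by (simp add: Suc_diff_le)
  then have "z ^ (Suc (Suc a) - b) * (1 + \<beta>*w) * w ^ b = z * ((1 + \<beta>*z) * w ^ Suc a - (w - z) * S)"
    by (simp only: IH[symmetric] mult.assoc)
  then show ?case unfolding sum_Suc by (simp add: algebra_simps)
qed

lemma branching_column_identity:
  fixes z w \<beta> :: "'a::comm_ring_1"
  assumes "b \<le> a" and "j < m"
  shows "(1 + \<beta>*z) * (w ^ (a + m - j) * (1 + \<beta>*w) ^ j) -
      z ^ (Suc a - b) * (w ^ (b + m - Suc j) * (1 + \<beta>*w) ^ Suc j) =
    (w - z) * (\<Sum>\<mu>=b..a. z ^ (a - \<mu>) * (1 + \<beta>*z - (if b = \<mu> then \<beta>*z else 0)) *
      (w ^ (\<mu> + m - 1 - j) * (1 + \<beta>*w) ^ j))"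
proof -
  define v where "v = w ^ (m - 1 - j) * (1 + \<beta>*w) ^ j"
  have exps: "a + m - j = Suc a + (m - 1 - j)" "b + m - Suc j = b + (m - 1 - j)"
    "\<And>\<mu>. \<mu> + m - 1 - j = \<mu> + (m - 1 - j)"
    using \<open>j < m\<close> by auto
  then have lhs: "(1 + \<beta>*z) * (w ^ (a + m - j) * (1 + \<beta>*w) ^ j) -
      z ^ (Suc a - b) * (w ^ (b + m - Suc j) * (1 + \<beta>*w) ^ Suc j) =
      v * ((1 + \<beta>*z) * w ^ Suc a - z ^ (Suc a - b) * (1 + \<beta>*w) * w ^ b)"
    and rhs: "(\<Sum>\<mu>=b..a. z ^ (a - \<mu>) * (1 + \<beta>*z - (if b = \<mu> then \<beta>*z else 0)) *
      (w ^ (\<mu> + m - 1 - j) * (1 + \<beta>*w) ^ j)) =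
      v * (\<Sum>\<mu>=b..a. z ^ (a - \<mu>) * (1 + \<beta>*z - (if b = \<mu> then \<beta>*z else 0)) * w ^ \<mu>)"
    by (simp_all only: exps) (simp_all add: v_def power_add sum_distrib_left algebra_simps)
  show ?thesis
    unfolding lhs rhs branching_difference_identity[OF \<open>b \<le> a\<close>] by (rule mult.left_commute)
qed

definition groth_matrix :: "'a::field \<Rightarrow> nat list \<Rightarrow> 'a list \<Rightarrow> 'a mat" where
  "groth_matrix \<beta> lam zs = mat (length zs) (length zs)
     (\<lambda>(j,k). (zs ! j) ^ (lam ! k + length zs - 1 - k) * (1 + \<beta> * zs ! j) ^ k)"

definition vandermonde :: "'a::field list \<Rightarrow> 'a" where
  "vandermonde zs = (\<Prod>j<length zs. \<Prod>k\<in>{j<..<length zs}. zs ! j - zs ! k)"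

lemma groth_matrix_carrier: "groth_matrix \<beta> lam zs \<in> carrier_mat (length zs) (length zs)"
  by (simp add: groth_matrix_def)

lemma groth_matrix_entry:
  "i < length zs \<Longrightarrow> k < length zs \<Longrightarrow>
    groth_matrix \<beta> lam zs $$ (i,k) = (zs ! i) ^ (lam ! k + length zs - 1 - k) * (1 + \<beta> * zs ! i) ^ k"
  by (simp add: groth_matrix_def)

lemma groth_eq_det_div_vandermonde: "groth \<beta> lam zs = det (groth_matrix \<beta> lam zs) / vandermonde zs"
  unfolding groth_def groth_matrix_def vandermonde_def Let_def ..

lemma vandermonde_Cons: "vandermonde (z # ws) = (\<Prod>k<length ws. z - ws ! k) * vandermonde ws"
proof -
  have shift: "{Suc a<..<Suc b} = Suc ` {a<..<b}" for a b :: nat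
    by (simp flip: atLeastSucLessThan_greaterThanLessThan)
  have shift0: "{0<..<Suc b} = Suc ` {..<b}" for b :: nat
    by (simp add: lessThan_atLeast0 flip: atLeastSucLessThan_greaterThanLessThan)
  have "vandermonde (z # ws) = (\<Prod>k\<in>{0<..<Suc (length ws)}. z - (z # ws) ! k) *
      (\<Prod>j<length ws. \<Prod>k\<in>{Suc j<..<Suc (length ws)}. ws ! j - (z # ws) ! k)"
    unfolding vandermonde_def length_Cons prod.lessThan_Suc_shift by simp
  also have "\<dots> = (\<Prod>k<length ws. z - ws ! k) * vandermonde ws"
    unfolding vandermonde_def shift0 shift by (simp add: prod.reindex)
  finally show ?thesis .
qed

section \<open>Interlacing partitions\<close>

lemma finite_bounded_partitions: "finite (bounded_partitions N b)"
proof (rule finite_subset)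
  show "bounded_partitions N b \<subseteq> {xs. set xs \<subseteq> {0..b} \<and> length xs = N}"
    unfolding bounded_partitions_def is_partition_def by auto
qed (simp add: finite_lists_length_eq)

lemma interlaces_sum_list_le:
  assumes "interlaces mu lam"
  shows "sum_list lam \<le> sum_list mu"
proof -
  have len: "length mu = Suc (length lam)" and le: "\<And>j. j < length lam \<Longrightarrow> lam ! j \<le> mu ! j"
    using assms by (auto simp: interlaces_def)
  have "sum_list lam = (\<Sum>j<length lam. lam ! j)" by (simp add: sum_list_sum_nth atLeast0LessThan)
  also have "\<dots> \<le> (\<Sum>j<length lam. mu ! j)" by (rule sum_mono) (simp add: le)
  also have "\<dots> \<le> (\<Sum>j<Suc (length lam). mu ! j)" by simp
  also have "\<dots> = sum_list mu" by (simp add: sum_list_sum_nth atLeast0LessThan len)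
  finally show ?thesis .
qed

lemma interlaces_in_bounded_partitions:
  assumes lam: "sorted_wrt (\<ge>) lam" and mu: "interlaces lam mu"
  shows "mu \<in> bounded_partitions (length lam - 1) (sum_list lam)"
proof -
  have len: "length lam = Suc (length mu)"
    and bounds: "\<And>j. j < length mu \<Longrightarrow> lam ! Suc j \<le> mu ! j \<and> mu ! j \<le> lam ! j"
    using mu by (auto simp: interlaces_def)
  have "mu ! j \<le> mu ! i" if "i < j" "j < length mu" for i j
  proof -
    have "lam ! j \<le> lam ! Suc i"
      using sorted_wrt_nth_less[OF lam, of "Suc i" j] that len by (cases "Suc i = j") auto
    then show ?thesis using bounds[of i] bounds[of j] that by linarith
  qed
  then have "sorted_wrt (\<ge>) mu" by (simp add: sorted_wrt_iff_nth_less)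
  moreover have "x \<le> sum_list lam" if "x \<in> set mu" for x
  proof -
    obtain j where "j < length mu" "x = mu ! j" using \<open>x \<in> set mu\<close> by (auto simp: in_set_conv_nth)
    then show ?thesis
      using bounds len order_trans[OF _ elem_le_sum_list[of j lam]] by auto
  qed
  ultimately show ?thesis using len by (simp add: bounded_partitions_def is_partition_def)
qed

lemma bij_betw_PiE_interlaces:
  assumes "length lam = Suc m"
  shows "bij_betw (\<lambda>\<sigma>. map \<sigma> [0..<m]) (PiE {..<m} (\<lambda>j. {lam ! Suc j..lam ! j}))
    {mu. interlaces lam mu}"
proof (rule bij_betw_byWitness[where f' = "\<lambda>mu. restrict (nth mu) {..<m}"])
  show "\<forall>\<sigma> \<in> PiE {..<m} (\<lambda>j. {lam ! Suc j..lam ! j}). restrict (nth (map \<sigma> [0..<m])) {..<m} = \<sigma>"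
    by (auto simp: PiE_def extensional_def)
  show "\<forall>mu \<in> {mu. interlaces lam mu}. map (restrict (nth mu) {..<m}) [0..<m] = mu"
    using assms by (auto simp: interlaces_def intro: nth_equalityI)
  show "(\<lambda>\<sigma>. map \<sigma> [0..<m]) ` PiE {..<m} (\<lambda>j. {lam ! Suc j..lam ! j}) \<subseteq> {mu. interlaces lam mu}"
    using assms by (auto simp: interlaces_def PiE_def Pi_def)
  show "(\<lambda>mu. restrict (nth mu) {..<m}) ` {mu. interlaces lam mu} \<subseteq> PiE {..<m} (\<lambda>j. {lam ! Suc j..lam ! j})"
    using assms by (auto simp: interlaces_def intro!: restrict_PiE_iff[THEN iffD2])
qed

lemma skew1_interlaces:
  assumes "interlaces lam mu"
  shows "skew1 \<beta> lam mu z = z ^ (lam ! length mu) *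
    (\<Prod>j<length mu. z ^ (lam ! j - mu ! j) * (1 + \<beta>*z - (if lam ! Suc j = mu ! j then \<beta>*z else 0)))"
proof -
  let ?m = "length mu"
  have len: "length lam = Suc ?m" and le: "\<And>j. j < ?m \<Longrightarrow> mu ! j \<le> lam ! j"
    using assms by (auto simp: interlaces_def)
  have "sum_list lam = lam ! ?m + (\<Sum>j<?m. (lam ! j - mu ! j) + mu ! j)"
    using le by (simp add: sum_list_sum_nth len atLeast0LessThan)
  then have "sum_list lam - sum_list mu = lam ! ?m + (\<Sum>j<?m. lam ! j - mu ! j)"
    by (simp add: sum.distrib sum_list_sum_nth atLeast0LessThan)
  then show ?thesis
    using assms by (simp add: skew1_def power_add power_sum prod.distrib)
qed

lemma sum_bounded_partitions_skew1:
  assumes "sorted_wrt (\<ge>) lam"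
  shows "(\<Sum>mu \<in> bounded_partitions (length lam - 1) (sum_list lam). skew1 \<beta> lam mu z * F mu) =
    (\<Sum>mu | interlaces lam mu. skew1 \<beta> lam mu z * F mu)"
  using assms interlaces_in_bounded_partitions
  by (intro sum.mono_neutral_right finite_bounded_partitions) (auto simp: skew1_def)

lemma finite_interlaces: "finite {mu. interlaces lam mu}"
proof (cases lam)
  case Nil
  then show ?thesis by (simp add: interlaces_def)
next
  case (Cons a l)
  then show ?thesis
    using bij_betw_finite[OF bij_betw_PiE_interlaces[of lam "length l"]] by (simp add: finite_PiE)
qed

lemma sum_interlaces_skew1_PiE:
  assumes "length lam = Suc m"
  shows "(\<Sum>mu | interlaces lam mu. skew1 \<beta> lam mu z * F mu) = z ^ (lam ! m) *
    (\<Sum>\<sigma> \<in> PiE {..<m} (\<lambda>j. {lam ! Suc j..lam ! j}).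
      (\<Prod>j<m. z ^ (lam ! j - \<sigma> j) * (1 + \<beta>*z - (if lam ! Suc j = \<sigma> j then \<beta>*z else 0))) *
      F (map \<sigma> [0..<m]))"
  unfolding sum.reindex_bij_betw[OF bij_betw_PiE_interlaces[OF assms], symmetric] sum_distrib_left
proof (intro sum.cong refl)
  fix \<sigma> assume "\<sigma> \<in> PiE {..<m} (\<lambda>j. {lam ! Suc j..lam ! j})"
  then have "interlaces lam (map \<sigma> [0..<m])"
    using bij_betw_imp_surj_on[OF bij_betw_PiE_interlaces[OF assms]] by blast
  then show "skew1 \<beta> lam (map \<sigma> [0..<m]) z * F (map \<sigma> [0..<m]) = z ^ (lam ! m) *
      ((\<Prod>j<m. z ^ (lam ! j - \<sigma> j) * (1 + \<beta>*z - (if lam ! Suc j = \<sigma> j then \<beta>*z else 0))) *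
      F (map \<sigma> [0..<m]))"
    by (simp add: skew1_interlaces)
qed

lemma sum_interlaces_skew1_degenerate:
  assumes lam: "sorted_wrt (\<ge>) lam" "lam \<noteq> []" and dg: "1 + \<beta>*z = 0"
  shows "(\<Sum>mu | interlaces lam mu. skew1 \<beta> lam mu z * F mu) = z ^ hd lam * F (tl lam)"
proof -
  have tl: "interlaces lam (tl lam)"
    using lam sorted_wrt_nth_less[OF lam(1), of _ "Suc _"] by (auto simp: interlaces_def nth_tl)
  have "skew1 \<beta> lam mu z = 0" if mu: "interlaces lam mu" and ne: "mu \<noteq> tl lam" for mu
  proof -
    have "length mu = length (tl lam)" using mu by (simp add: interlaces_def)
    then obtain j where "j < length mu" "lam ! Suc j \<noteq> mu ! j"
      using ne nth_equalityI[of mu "tl lam"] by (force simp: nth_tl)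
    then show ?thesis using mu dg by (auto simp: skew1_interlaces)
  qed
  then have "(\<Sum>mu | interlaces lam mu. skew1 \<beta> lam mu z * F mu) = skew1 \<beta> lam (tl lam) z * F (tl lam)"
    using tl by (subst sum.remove[of _ "tl lam"]) (auto simp: finite_interlaces intro!: sum.neutral)
  moreover have "skew1 \<beta> lam (tl lam) z = z ^ hd lam"
    using tl lam by (cases lam) (auto simp: skew1_def)
  ultimately show ?thesis by simp
qed

section \<open>The branching rule\<close>

lemma det_groth_matrix_column_sums:
  fixes c :: "nat \<Rightarrow> nat \<Rightarrow> 'a::field"
  assumes "\<And>j. j < length ws \<Longrightarrow> finite (S j)"
  shows "det (mat (length ws) (length ws) (\<lambda>(i,j). (ws ! i - z) *
      (\<Sum>\<mu>\<in>S j. c j \<mu> * ((ws ! i) ^ (\<mu> + length ws - 1 - j) * (1 + \<beta> * ws ! i) ^ j)))) =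
    (\<Prod>i<length ws. ws ! i - z) * (\<Sum>\<sigma> \<in> PiE {..<length ws} S.
      (\<Prod>j<length ws. c j (\<sigma> j)) * det (groth_matrix \<beta> (map \<sigma> [0..<length ws]) ws))"
proof -
  have "mat (length ws) (length ws) (\<lambda>(i,j).
      (ws ! i) ^ (\<sigma> j + length ws - 1 - j) * (1 + \<beta> * ws ! i) ^ j) =
      groth_matrix \<beta> (map \<sigma> [0..<length ws]) ws" for \<sigma>
    unfolding groth_matrix_def by (rule eq_matI) auto
  then show ?thesis
    using assms by (simp add: det_mat_row_scale det_mat_sum_columns)
qed

lemma det_groth_matrix_Cons_reduce:
  fixes \<beta> z :: "'a::field"
  assumes len: "length lam = Suc (length ws)" and lam: "sorted_wrt (\<ge>) lam"
  shows "(1 + \<beta>*z) ^ length ws * det (groth_matrix \<beta> lam (z # ws)) =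
    (-1) ^ length ws * (z ^ (lam ! length ws) * (1 + \<beta>*z) ^ length ws) *
    det (mat (length ws) (length ws) (\<lambda>(i,j). (ws ! i - z) * (\<Sum>\<mu>\<in>{lam ! Suc j..lam ! j}.
      z ^ (lam ! j - \<mu>) * (1 + \<beta>*z - (if lam ! Suc j = \<mu> then \<beta>*z else 0)) *
      ((ws ! i) ^ (\<mu> + length ws - 1 - j) * (1 + \<beta> * ws ! i) ^ j))))"
proof -
  define m where "m = length ws"
  define M where "M = groth_matrix \<beta> lam (z # ws)"
  have M: "M \<in> carrier_mat (Suc m) (Suc m)" unfolding M_def m_def by (metis groth_matrix_carrier length_Cons)
  have M_entry: "M $$ (i,k) = ((z # ws) ! i) ^ (lam ! k + m - k) * (1 + \<beta> * (z # ws) ! i) ^ k"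
    if "i < Suc m" "k < Suc m" for i k
    using that unfolding M_def m_def by (simp add: groth_matrix_entry)
  have step: "lam ! Suc k \<le> lam ! k" if "k < m" for k
    using sorted_wrt_nth_less[OF lam, of k "Suc k"] that len by (simp add: m_def)
  let ?y = "\<lambda>k. z ^ (Suc (lam ! k) - lam ! Suc k)"
  have "(1 + \<beta>*z) ^ m * det M = (-1) ^ m * M $$ (0,m) *
      det (mat m m (\<lambda>(i,k). (1 + \<beta>*z) * M $$ (Suc i, k) - ?y k * M $$ (Suc i, Suc k)))"
  proof (rule det_reduce_first_row[OF M])
    fix k assume "k < m"
    then have e: "lam ! k + m - k = (Suc (lam ! k) - lam ! Suc k) + (lam ! Suc k + m - Suc k)"
      using step[of k] by simp
    show "(1 + \<beta>*z) * M $$ (0,k) = ?y k * M $$ (0, Suc k)"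
      using M_entry[of 0 k] M_entry[of 0 "Suc k"] \<open>k < m\<close> unfolding e power_add by (simp add: ac_simps)
  qed
  also have "M $$ (0,m) = z ^ (lam ! m) * (1 + \<beta>*z) ^ m"
    using M_entry[of 0 m] by simp
  also have "mat m m (\<lambda>(i,k). (1 + \<beta>*z) * M $$ (Suc i, k) - ?y k * M $$ (Suc i, Suc k)) =
      mat m m (\<lambda>(i,j). (ws ! i - z) * (\<Sum>\<mu>\<in>{lam ! Suc j..lam ! j}.
        z ^ (lam ! j - \<mu>) * (1 + \<beta>*z - (if lam ! Suc j = \<mu> then \<beta>*z else 0)) *
        ((ws ! i) ^ (\<mu> + m - 1 - j) * (1 + \<beta> * ws ! i) ^ j)))"
  proof (rule eq_matI, goal_cases)
    case (1 i j)
    then have i: "i < m" and j: "j < m" by auto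
    then show ?case
      using branching_column_identity[OF step[OF j] j, of \<beta> z "ws ! i"] by (simp add: M_entry)
  qed auto
  finally show ?thesis unfolding M_def m_def .
qed

lemma det_groth_matrix_Cons_nondegenerate:
  fixes \<beta> z :: "'a::field"
  assumes len: "length lam = Suc (length ws)" and lam: "sorted_wrt (\<ge>) lam" and nd: "1 + \<beta>*z \<noteq> 0"
  shows "det (groth_matrix \<beta> lam (z # ws)) = (\<Prod>k<length ws. z - ws ! k) * z ^ (lam ! length ws) *
    (\<Sum>\<sigma> \<in> PiE {..<length ws} (\<lambda>j. {lam ! Suc j..lam ! j}).
      (\<Prod>j<length ws. z ^ (lam ! j - \<sigma> j) * (1 + \<beta>*z - (if lam ! Suc j = \<sigma> j then \<beta>*z else 0))) *
      det (groth_matrix \<beta> (map \<sigma> [0..<length ws]) ws))"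
    (is "_ = ?P * ?z * ?S")
proof -
  let ?m = "length ws"
  have "(\<Prod>i<?m. z - ws ! i) = (\<Prod>i<?m. (-1) * (ws ! i - z))" by simp
  then have sign: "(-1) ^ ?m * (\<Prod>i<?m. ws ! i - z) = ?P"
    by (simp only: prod.distrib) simp
  have "(1 + \<beta>*z) ^ ?m * det (groth_matrix \<beta> lam (z # ws)) =
      (-1) ^ ?m * (?z * (1 + \<beta>*z) ^ ?m) * ((\<Prod>i<?m. ws ! i - z) * ?S)"
    unfolding det_groth_matrix_Cons_reduce[OF len lam]
    by (subst det_groth_matrix_column_sums[where c = "\<lambda>j \<mu>. z ^ (lam ! j - \<mu>) *
        (1 + \<beta>*z - (if lam ! Suc j = \<mu> then \<beta>*z else 0))"]) (simp_all add: mult.assoc)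
  also have "\<dots> = (1 + \<beta>*z) ^ ?m * (?P * ?z * ?S)"
    by (simp add: sign[symmetric] ac_simps)
  finally show ?thesis using nd by simp
qed

lemma det_groth_matrix_Cons_degenerate:
  fixes \<beta> z :: "'a::field"
  assumes len: "length lam = Suc (length ws)" and dg: "1 + \<beta>*z = 0"
  shows "det (groth_matrix \<beta> lam (z # ws)) =
    (\<Prod>k<length ws. z - ws ! k) * z ^ (lam ! 0) * det (groth_matrix \<beta> (tl lam) ws)"
proof -
  define m where "m = length ws"
  define M where "M = groth_matrix \<beta> lam (z # ws)"
  have M: "M \<in> carrier_mat (Suc m) (Suc m)" unfolding M_def m_def by (metis groth_matrix_carrier length_Cons)
  have M_entry: "M $$ (i,k) = ((z # ws) ! i) ^ (lam ! k + m - k) * (1 + \<beta> * (z # ws) ! i) ^ k"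
    if "i < Suc m" "k < Suc m" for i k
    using that unfolding M_def m_def by (simp add: groth_matrix_entry)
  have G: "mat m m (\<lambda>ij. groth_matrix \<beta> (tl lam) ws $$ ij) = groth_matrix \<beta> (tl lam) ws"
    unfolding groth_matrix_def m_def by (rule eq_matI) auto
  have "det M = (-1) ^ 0 * M $$ (0,0) * det (mat_delete M 0 0)"
    by (rule det_single_entry_first_row[OF M]) (auto simp: M_entry dg)
  also have "mat_delete M 0 0 = mat m m (\<lambda>(i,j). (1 + \<beta> * ws ! i) * groth_matrix \<beta> (tl lam) ws $$ (i,j))"
  proof (rule eq_matI, goal_cases)
    case (1 i j)
    then have i: "i < m" and j: "j < m" by auto
    have "lam ! Suc j + m - Suc j = tl lam ! j + m - 1 - j" using len j by (simp add: nth_tl m_def)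
    then show ?case using i j M by (simp add: mat_delete_def M_entry groth_matrix_entry m_def)
  qed (use M in auto)
  finally have "det M = z ^ (lam ! 0 + m) * ((\<Prod>i<m. 1 + \<beta> * ws ! i) * det (groth_matrix \<beta> (tl lam) ws))"
    using det_mat_row_scale[where r="\<lambda>i. 1 + \<beta> * ws ! i" and f="\<lambda>i j. groth_matrix \<beta> (tl lam) ws $$ (i,j)" and n=m]
    by (simp add: M_entry G)
  moreover have "z ^ m * (\<Prod>i<m. 1 + \<beta> * ws ! i) = (\<Prod>k<m. z - ws ! k)"
  proof -
    have "z * (1 + \<beta> * w) = z - w + w * (1 + \<beta> * z)" for w
      by (simp add: algebra_simps)
    then have "z * (1 + \<beta> * w) = z - w" for w
      using dg by simp
    then have "(\<Prod>k<m. z - ws ! k) = (\<Prod>k<m. z * (1 + \<beta> * ws ! k))" by simp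
    then show ?thesis by (simp add: prod.distrib)
  qed
  ultimately show ?thesis unfolding M_def m_def by (simp add: power_add ac_simps)
qed

lemma det_groth_matrix_Cons:
  fixes \<beta> z :: "'a::field"
  assumes len: "length lam = Suc (length ws)" and lam: "sorted_wrt (\<ge>) lam"
  shows "det (groth_matrix \<beta> lam (z # ws)) = (\<Prod>k<length ws. z - ws ! k) *
    (\<Sum>mu | interlaces lam mu. skew1 \<beta> lam mu z * det (groth_matrix \<beta> mu ws))"
proof (cases "1 + \<beta>*z = 0")
  case True
  moreover have "lam \<noteq> []" "hd lam = lam ! 0" using len by (cases lam; simp)+
  ultimately show ?thesis
    using lam len by (simp add: det_groth_matrix_Cons_degenerate sum_interlaces_skew1_degenerate)
next
  case False
  then show ?thesis
    using lam len by (simp add: det_groth_matrix_Cons_nondegenerate sum_interlaces_skew1_PiE mult.assoc)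
qed

lemma groth_Cons:
  fixes \<beta> z :: "'a::field"
  assumes lam: "is_partition (Suc (length ws)) lam" and z: "z \<notin> set ws"
  shows "groth \<beta> lam (z # ws) =
    (\<Sum>mu \<in> bounded_partitions (length ws) (sum_list lam). skew1 \<beta> lam mu z * groth \<beta> mu ws)"
proof -
  have len: "length lam = Suc (length ws)" and srt: "sorted_wrt (\<ge>) lam"
    using lam by (auto simp: is_partition_def)
  have "(\<Prod>k<length ws. z - ws ! k) \<noteq> 0" using z by auto
  then have "groth \<beta> lam (z # ws) =
      (\<Sum>mu | interlaces lam mu. skew1 \<beta> lam mu z * det (groth_matrix \<beta> mu ws)) / vandermonde ws"
    by (simp add: groth_eq_det_div_vandermonde det_groth_matrix_Cons[OF len srt] vandermonde_Cons)
  also have "\<dots> = (\<Sum>mu | interlaces lam mu. skew1 \<beta> lam mu z * groth \<beta> mu ws)"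
    by (simp add: groth_eq_det_div_vandermonde sum_divide_distrib)
  also have "\<dots> = (\<Sum>mu \<in> bounded_partitions (length ws) (sum_list lam). skew1 \<beta> lam mu z * groth \<beta> mu ws)"
    by (subst sum_bounded_partitions_skew1[OF srt, symmetric]) (simp add: len)
  finally show ?thesis .
qed

lemma groth_append:
  fixes \<beta> :: "'a::field"
  assumes "is_partition (length zs + length ws) lam" and "distinct (zs @ ws)" and "sum_list lam \<le> b"
  shows "groth \<beta> lam (zs @ ws) =
    (\<Sum>nu \<in> bounded_partitions (length ws) b. skewG \<beta> lam nu zs * groth \<beta> nu ws)"
  using assms
proof (induction zs arbitrary: lam)
  case Nil
  then have "lam \<in> bounded_partitions (length ws) b"
    by (auto simp: bounded_partitions_def intro: order_trans[OF member_le_sum_list])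
  moreover have "skewG \<beta> lam nu [] * groth \<beta> nu ws = (if lam = nu then groth \<beta> nu ws else 0)" for nu
    by simp
  ultimately show ?case by (simp add: finite_bounded_partitions)
next
  case (Cons z zs)
  let ?K = "bounded_partitions (length (zs @ ws)) (sum_list lam)"
  let ?B = "bounded_partitions (length ws) b"
  have "groth \<beta> lam ((z # zs) @ ws) = (\<Sum>kap \<in> ?K. skew1 \<beta> lam kap z * groth \<beta> kap (zs @ ws))"
    using Cons.prems by (simp add: groth_Cons)
  also have "\<dots> = (\<Sum>kap \<in> ?K. skew1 \<beta> lam kap z * (\<Sum>nu \<in> ?B. skewG \<beta> kap nu zs * groth \<beta> nu ws))"
  proof (intro sum.cong refl)
    fix kap assume kap: "kap \<in> ?K"
    show "skew1 \<beta> lam kap z * groth \<beta> kap (zs @ ws) =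
        skew1 \<beta> lam kap z * (\<Sum>nu \<in> ?B. skewG \<beta> kap nu zs * groth \<beta> nu ws)"
    proof (cases "interlaces lam kap")
      case True
      then have "sum_list kap \<le> b" using interlaces_sum_list_le Cons.prems(3) by (meson order_trans)
      then show ?thesis using kap Cons.prems(2) by (simp add: Cons.IH bounded_partitions_def)
    qed (simp add: skew1_def)
  qed
  also have "\<dots> = (\<Sum>nu \<in> ?B. (\<Sum>kap \<in> ?K. skew1 \<beta> lam kap z * skewG \<beta> kap nu zs) * groth \<beta> nu ws)"
    unfolding sum_distrib_left sum_distrib_right by (subst sum.swap) (simp add: mult.assoc)
  also have "\<dots> = (\<Sum>nu \<in> ?B. skewG \<beta> lam nu (z # zs) * groth \<beta> nu ws)"
    using Cons.prems(1) by (simp add: is_partition_def)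
  finally show ?case .
qed

theorem mainTheorem3:
  fixes \<beta> :: "'a::field_char_0" and zs ws :: "'a list" and lam :: "nat list"
  assumes "is_partition (length zs + length ws) lam"
    and "distinct (zs @ ws)"
  shows "groth \<beta> lam (zs @ ws) =
    (\<Sum>nu \<in> bounded_partitions (length ws) (sum_list lam).
        skewG \<beta> lam nu zs * groth \<beta> nu ws)"
  using groth_append[OF assms order_refl] .

end
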